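(* Let $G$ be a graph and $k\in\mathbb N$. Every principal tangle of order $k$ in $G$ is a robust principal $k$-profile.
   Context: A separation of $G$ is an ordered pair $(A,B)$ of subsets of $V(G)$ with $A\cup B=V(G)$ and no edge between $A\setminus B$ and $B\setminus A$; its order is $|A\cap B|$. $(A,B)\le(C,D)$ means $A\subseteq C$, $D\subseteq B$. A principal tangle of order $k$ is a set $\theta$ of separations of order at most $k-1$ such that: ($\theta$1) for all $(A_1,B_1),(A_2,B_2),(A_3,B_3)\in\theta$, $G\neq G[A_1]\cup G[A_2]\cup G[A_3]$; ($\theta$2) for every set $X$ of fewer than $k$ vertices there is a component $C$ of $G-X$ with $(V(G)\setminus C,C\cup X)\in\theta$; ($\theta$3) for every separation $(A,B)$ of order at most $k-1$, $(A,B)\in\theta$ or $(B,A)\in\theta$. A profile is a set $P$ of separations with (P1) if $(C,D)\le(A,B)\in P$ then $(D,C)\notin P$, and (P2) if $(A,B),(C,D)\in P$ then $(B\cap D,A\cup C)\notin P$. $P$ is principal if for every family $((A_i,B_i))_{i\in I}$ in $P$ with all $A_i\cap B_i$ equal, $\bigcap_i(B_i\setminus A_i)\neq\emptyset$; a $k$-profile if all its separations have order $<k$ and for each separation $(A,B)$ of order $<k$, $(A,B)\in P$ or $(B,A)\in P$; robust if for every $(A,B)\in P$ and every separation $(C,D)$ of finite order, if $(B\cap C,A\cup D)$, $(B\cap D,A\cup C)$ both have order $<|A\cap B|$ then one of them is not in $P$. *)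

theory Defs
  imports Main "HOL-Library.Extended_Nat"
begin

definition graph :: "'a set \<Rightarrow> ('a \<Rightarrow> 'a \<Rightarrow> bool) \<Rightarrow> bool" where
  "graph V E \<longleftrightarrow> (\<forall>u v. E u v \<longrightarrow> u \<in> V \<and> v \<in> V \<and> u \<noteq> v \<and> E v u)"

type_synonym 'a sep = "'a set \<times> 'a set"

definition separation :: "'a set \<Rightarrow> ('a \<Rightarrow> 'a \<Rightarrow> bool) \<Rightarrow> 'a sep \<Rightarrow> bool" where
  "separation V E s \<longleftrightarrow> (case s of (A, B) \<Rightarrow>
     A \<union> B = V \<and> (\<forall>u v. u \<in> A - B \<longrightarrow> v \<in> B - A \<longrightarrow> \<not> E u v))"

definition sep_order :: "'a sep \<Rightarrow> enat" where
  "sep_order s = (case s of (A, B) \<Rightarrow>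
     (if finite (A \<inter> B) then enat (card (A \<inter> B)) else \<infinity>))"

definition sep_le :: "'a sep \<Rightarrow> 'a sep \<Rightarrow> bool" where
  "sep_le s t \<longleftrightarrow> fst s \<subseteq> fst t \<and> snd t \<subseteq> snd s"

definition flip :: "'a sep \<Rightarrow> 'a sep" where
  "flip s = (snd s, fst s)"

text \<open>\<open>G = G[A1] \<union> G[A2] \<union> G[A3]\<close>\<close>
definition covers3 :: "'a set \<Rightarrow> ('a \<Rightarrow> 'a \<Rightarrow> bool) \<Rightarrow> 'a set \<Rightarrow> 'a set \<Rightarrow> 'a set \<Rightarrow> bool" where
  "covers3 V E A1 A2 A3 \<longleftrightarrow>
     V = A1 \<union> A2 \<union> A3 \<and>
     (\<forall>u v. E u v \<longleftrightarrow> ((u \<in> A1 \<and> v \<in> A1 \<or> u \<in> A2 \<and> v \<in> A2 \<or> u \<in> A3 \<and> v \<in> A3) \<and> E u v))"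

definition component :: "'a set \<Rightarrow> ('a \<Rightarrow> 'a \<Rightarrow> bool) \<Rightarrow> 'a set \<Rightarrow> 'a set \<Rightarrow> bool" where
  "component V E X C \<longleftrightarrow> (\<exists>u \<in> V - X.
     C = {v. (\<lambda>x y. E x y \<and> x \<in> V - X \<and> y \<in> V - X)\<^sup>*\<^sup>* u v})"

definition principal_tangle :: "'a set \<Rightarrow> ('a \<Rightarrow> 'a \<Rightarrow> bool) \<Rightarrow> nat \<Rightarrow> 'a sep set \<Rightarrow> bool" where
  "principal_tangle V E k \<theta> \<longleftrightarrow>
     (\<forall>s \<in> \<theta>. separation V E s \<and> sep_order s < enat k) \<and>
     (\<forall>s1 \<in> \<theta>. \<forall>s2 \<in> \<theta>. \<forall>s3 \<in> \<theta>. \<not> covers3 V E (fst s1) (fst s2) (fst s3)) \<and>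
     (\<forall>X. X \<subseteq> V \<longrightarrow> finite X \<longrightarrow> card X < k \<longrightarrow>
        (\<exists>C. component V E X C \<and> (V - C, C \<union> X) \<in> \<theta>)) \<and>
     (\<forall>A B. separation V E (A, B) \<longrightarrow> sep_order (A, B) < enat k \<longrightarrow>
        (A, B) \<in> \<theta> \<or> (B, A) \<in> \<theta>)"

definition profile :: "'a set \<Rightarrow> ('a \<Rightarrow> 'a \<Rightarrow> bool) \<Rightarrow> 'a sep set \<Rightarrow> bool" where
  "profile V E P \<longleftrightarrow>
     (\<forall>s \<in> P. separation V E s) \<and>
     (\<forall>A B C D. sep_le (C, D) (A, B) \<longrightarrow> (A, B) \<in> P \<longrightarrow> (D, C) \<notin> P) \<and>
     (\<forall>A B C D. (A, B) \<in> P \<longrightarrow> (C, D) \<in> P \<longrightarrow> (B \<inter> D, A \<union> C) \<notin> P)"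

definition principal_profile :: "'a sep set \<Rightarrow> bool" where
  "principal_profile P \<longleftrightarrow>
     (\<forall>F. F \<subseteq> P \<longrightarrow> F \<noteq> {} \<longrightarrow>
        (\<forall>s \<in> F. \<forall>t \<in> F. fst s \<inter> snd s = fst t \<inter> snd t) \<longrightarrow>
        (\<Inter>s \<in> F. snd s - fst s) \<noteq> {})"

definition k_profile :: "'a set \<Rightarrow> ('a \<Rightarrow> 'a \<Rightarrow> bool) \<Rightarrow> nat \<Rightarrow> 'a sep set \<Rightarrow> bool" where
  "k_profile V E k P \<longleftrightarrow> profile V E P \<and>
     (\<forall>s \<in> P. sep_order s < enat k) \<and>
     (\<forall>A B. separation V E (A, B) \<longrightarrow> sep_order (A, B) < enat k \<longrightarrow>
        (A, B) \<in> P \<or> (B, A) \<in> P)"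

definition robust :: "'a set \<Rightarrow> ('a \<Rightarrow> 'a \<Rightarrow> bool) \<Rightarrow> 'a sep set \<Rightarrow> bool" where
  "robust V E P \<longleftrightarrow>
     (\<forall>A B C D. (A, B) \<in> P \<longrightarrow> separation V E (C, D) \<longrightarrow> sep_order (C, D) < \<infinity> \<longrightarrow>
        sep_order (B \<inter> C, A \<union> D) < sep_order (A, B) \<longrightarrow>
        sep_order (B \<inter> D, A \<union> C) < sep_order (A, B) \<longrightarrow>
        (B \<inter> C, A \<union> D) \<notin> P \<or> (B \<inter> D, A \<union> C) \<notin> P)"

end

theory Submission
  imports Defs
begin

text \<open>Every failure of the profile axioms, of robustness or of principality yields three
  separations in \<open>\<theta>\<close> whose small sides cover \<open>G\<close>, which (\<theta>1) forbids. For (P2)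
  and for robustness the covering sets are \<open>A\<close>, \<open>C\<close>, \<open>B \<inter> D\<close> (resp. \<open>A\<close>, \<open>B \<inter> C\<close>,
  \<open>B \<inter> D\<close>), because every edge lies on one side of each separation. For principality,
  let \<open>X\<close> be the common separator and \<open>C\<close> the component of \<open>G - X\<close> chosen by (\<theta>2).
  Being connected, \<open>C\<close> lies in \<open>A - B\<close> or in \<open>B - A\<close> for every \<open>(A, B)\<close> of the family,
  and the first alternative would let \<open>V - C\<close> and \<open>A\<close> cover \<open>G\<close>; so the nonempty set \<open>C\<close>
  lies in every \<open>B - A\<close>.\<close>

lemma separation_Un: "separation V E (A, B) \<Longrightarrow> A \<union> B = V"
  unfolding separation_def by simp

lemma separation_edge:
  assumes "graph V E" "separation V E (A, B)" "E u v"
  shows "u \<in> A \<and> v \<in> A \<or> u \<in> B \<and> v \<in> B"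
  using assms unfolding graph_def separation_def by blast

lemma finite_separator_if_sep_order_less:
  assumes "sep_order (A, B) < enat k"
  shows "finite (A \<inter> B)" "card (A \<inter> B) < k"
  using assms unfolding sep_order_def by (auto split: if_splits)

lemma covers3I:
  assumes "V = A1 \<union> A2 \<union> A3"
    and "\<And>u v. E u v \<Longrightarrow> u \<in> A1 \<and> v \<in> A1 \<or> u \<in> A2 \<and> v \<in> A2 \<or> u \<in> A3 \<and> v \<in> A3"
  shows "covers3 V E A1 A2 A3"
  using assms unfolding covers3_def by auto

lemma covers3_mono:
  assumes "covers3 V E A1 A2 A3"
    and "A1 \<subseteq> A1'" "A2 \<subseteq> A2'" "A3 \<subseteq> A3'" "A1' \<union> A2' \<union> A3' \<subseteq> V"
  shows "covers3 V E A1' A2' A3'"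
proof -
  have "V = A1 \<union> A2 \<union> A3" using assms(1) unfolding covers3_def by blast
  then have "V = A1' \<union> A2' \<union> A3'" using assms(2-5) by blast
  moreover have "E u v \<Longrightarrow> u \<in> A1' \<and> v \<in> A1' \<or> u \<in> A2' \<and> v \<in> A2' \<or> u \<in> A3' \<and> v \<in> A3'" for u v
    using assms(1-4) unfolding covers3_def by blast
  ultimately show ?thesis by (rule covers3I)
qed

lemma separation_covers3:
  assumes "graph V E" "separation V E (A, B)"
  shows "covers3 V E A B B"
  using separation_Un[OF assms(2)] separation_edge[OF assms]
  by (intro covers3I) blast+

lemma separation_corners_covers3:
  assumes "graph V E" "separation V E (A, B)" "separation V E (C, D)"
  shows "covers3 V E (B \<inter> C) (B \<inter> D) A"
proof (rule covers3I)
  show "V = B \<inter> C \<union> B \<inter> D \<union> A"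
    using separation_Un[OF assms(2)] separation_Un[OF assms(3)] by blast
  show "u \<in> B \<inter> C \<and> v \<in> B \<inter> C \<or> u \<in> B \<inter> D \<and> v \<in> B \<inter> D \<or> u \<in> A \<and> v \<in> A"
    if "E u v" for u v
    using separation_edge[OF assms(1,2) that] separation_edge[OF assms(1,3) that] by blast
qed

lemma component_subset:
  assumes "component V E X C"
  shows "C \<subseteq> V - X"
proof -
  obtain u where u: "u \<in> V - X"
    and C: "C = {v. (\<lambda>x y. E x y \<and> x \<in> V - X \<and> y \<in> V - X)\<^sup>*\<^sup>* u v}"
    using assms unfolding component_def by blast
  show ?thesis
  proof
    fix v assume "v \<in> C"
    then have "(\<lambda>x y. E x y \<and> x \<in> V - X \<and> y \<in> V - X)\<^sup>*\<^sup>* u v" using C by simp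
    then show "v \<in> V - X" using u by (induction rule: rtranclp_induct) auto
  qed
qed

lemma component_nonempty: "component V E X C \<Longrightarrow> C \<noteq> {}"
  unfolding component_def by blast

lemma component_closed:
  assumes "graph V E" "component V E X C" "w \<in> C" "E w v" "v \<notin> X"
  shows "v \<in> C"
proof -
  obtain u where C: "C = {v. (\<lambda>x y. E x y \<and> x \<in> V - X \<and> y \<in> V - X)\<^sup>*\<^sup>* u v}"
    using assms(2) unfolding component_def by blast
  have "w \<in> V - X" using component_subset[OF assms(2)] assms(3) by blast
  moreover have "v \<in> V" using assms(1,4) unfolding graph_def by blast
  ultimately show ?thesis
    using assms(3-5) C by (auto intro: rtranclp.rtrancl_into_rtrancl)
qed

lemma separation_component:
  assumes "graph V E" "X \<subseteq> V" "component V E X C"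
  shows "separation V E (V - C, C \<union> X)"
proof -
  have "V - C \<union> (C \<union> X) = V" using component_subset[OF assms(3)] assms(2) by blast
  moreover have "\<not> E u v" if u: "u \<in> V - C - (C \<union> X)" and v: "v \<in> C \<union> X - (V - C)" for u v
  proof
    assume "E u v"
    have "v \<in> C" using v assms(2) by blast
    moreover have "E v u" using assms(1) \<open>E u v\<close> unfolding graph_def by blast
    moreover have "u \<notin> X" using u by blast
    ultimately have "u \<in> C" by (rule component_closed[OF assms(1,3)])
    then show False using u by blast
  qed
  ultimately show ?thesis by (simp add: separation_def)
qed

lemma component_within_side:
  assumes G: "graph V E" and sep: "separation V E (A, B)" and comp: "component V E (A \<inter> B) C"
  shows "C \<subseteq> A - B \<or> C \<subseteq> B - A"
proof -
  let ?X = "A \<inter> B"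
  obtain u where C: "C = {v. (\<lambda>x y. E x y \<and> x \<in> V - ?X \<and> y \<in> V - ?X)\<^sup>*\<^sup>* u v}"
    using comp unfolding component_def by blast
  have same_side: "v \<in> A - B \<longleftrightarrow> u \<in> A - B" if "v \<in> C" for v
  proof -
    from that have "(\<lambda>x y. E x y \<and> x \<in> V - ?X \<and> y \<in> V - ?X)\<^sup>*\<^sup>* u v" using C by simp
    then show ?thesis
    proof (induction rule: rtranclp_induct)
      case (step y z)
      then show ?case using separation_edge[OF G sep, of y z] by blast
    qed simp
  qed
  have "C \<subseteq> (A - B) \<union> (B - A)"
    using component_subset[OF comp] separation_Un[OF sep] by blast
  then show ?thesis using same_side by blast
qed

definition no_three_cover :: "'a set \<Rightarrow> ('a \<Rightarrow> 'a \<Rightarrow> bool) \<Rightarrow> 'a sep set \<Rightarrow> bool" where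
  "no_three_cover V E P \<longleftrightarrow>
     (\<forall>A1 B1 A2 B2 A3 B3. (A1, B1) \<in> P \<longrightarrow> (A2, B2) \<in> P \<longrightarrow> (A3, B3) \<in> P \<longrightarrow>
        \<not> covers3 V E A1 A2 A3)"

lemma no_three_coverD:
  "no_three_cover V E P \<Longrightarrow> (A1, B1) \<in> P \<Longrightarrow> (A2, B2) \<in> P \<Longrightarrow> (A3, B3) \<in> P \<Longrightarrow>
    \<not> covers3 V E A1 A2 A3"
  unfolding no_three_cover_def by blast

lemma principal_tangleD:
  assumes "principal_tangle V E k \<theta>"
  shows "\<forall>s \<in> \<theta>. separation V E s" "\<forall>s \<in> \<theta>. sep_order s < enat k"
    and "\<And>X. X \<subseteq> V \<Longrightarrow> finite X \<Longrightarrow> card X < k \<Longrightarrow>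
           \<exists>C. component V E X C \<and> (V - C, C \<union> X) \<in> \<theta>"
    and "\<And>A B. separation V E (A, B) \<Longrightarrow> sep_order (A, B) < enat k \<Longrightarrow>
           (A, B) \<in> \<theta> \<or> (B, A) \<in> \<theta>"
  using assms unfolding principal_tangle_def by simp_all

lemma no_three_cover_if_principal_tangle:
  assumes "principal_tangle V E k \<theta>"
  shows "no_three_cover V E \<theta>"
  unfolding no_three_cover_def
proof (intro allI impI)
  fix A1 B1 A2 B2 A3 B3
  assume "(A1, B1) \<in> \<theta>" "(A2, B2) \<in> \<theta>" "(A3, B3) \<in> \<theta>"
  moreover have "\<forall>s1 \<in> \<theta>. \<forall>s2 \<in> \<theta>. \<forall>s3 \<in> \<theta>. \<not> covers3 V E (fst s1) (fst s2) (fst s3)"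
    using assms unfolding principal_tangle_def by simp
  ultimately show "\<not> covers3 V E A1 A2 A3" by (metis fst_conv)
qed

lemma profile_if_no_three_cover:
  assumes G: "graph V E" and seps: "\<forall>s \<in> P. separation V E s" and nc: "no_three_cover V E P"
  shows "profile V E P"
  unfolding profile_def
proof (intro conjI allI impI notI)
  show "\<forall>s \<in> P. separation V E s" by (fact seps)
next
  fix A B C D
  assume "sep_le (C, D) (A, B)" and P: "(A, B) \<in> P" "(D, C) \<in> P"
  moreover have "covers3 V E D A A"
  proof -
    have sep: "separation V E (D, C)" "separation V E (A, B)" using seps P by auto
    have "C \<subseteq> A" using \<open>sep_le (C, D) (A, B)\<close> unfolding sep_le_def by simp
    show ?thesis
      by (rule covers3_mono[OF separation_covers3[OF G sep(1)]])
        (use \<open>C \<subseteq> A\<close> separation_Un[OF sep(1)] separation_Un[OF sep(2)] in blast)+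
  qed
  ultimately show False using no_three_coverD[OF nc] by blast
next
  fix A B C D
  assume P: "(A, B) \<in> P" "(C, D) \<in> P" "(B \<inter> D, A \<union> C) \<in> P"
  have sep: "separation V E (A, B)" "separation V E (C, D)" using seps P by auto
  have "covers3 V E A (B \<inter> D) C"
    by (rule covers3_mono[OF separation_corners_covers3[OF G sep(2,1)]])
      (use separation_Un[OF sep(1)] separation_Un[OF sep(2)] in blast)+
  then show False using no_three_coverD[OF nc P(1,3,2)] by blast
qed

lemma robust_if_no_three_cover:
  assumes G: "graph V E" and seps: "\<forall>s \<in> P. separation V E s" and nc: "no_three_cover V E P"
  shows "robust V E P"
  unfolding robust_def
proof (intro allI impI)
  fix A B C D
  assume "(A, B) \<in> P" "separation V E (C, D)"
  then have "covers3 V E (B \<inter> C) (B \<inter> D) A"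
    using seps separation_corners_covers3[OF G] by blast
  then show "(B \<inter> C, A \<union> D) \<notin> P \<or> (B \<inter> D, A \<union> C) \<notin> P"
    using no_three_coverD[OF nc _ _ \<open>(A, B) \<in> P\<close>] by blast
qed

lemma component_within_big_side:
  assumes G: "graph V E" and nc: "no_three_cover V E P"
    and AB: "(A, B) \<in> P" "separation V E (A, B)"
    and comp: "component V E (A \<inter> B) C" and CP: "(V - C, C \<union> (A \<inter> B)) \<in> P"
  shows "C \<subseteq> B - A"
proof -
  have "\<not> C \<subseteq> A - B"
  proof
    assume "C \<subseteq> A - B"
    then have "C \<union> (A \<inter> B) \<subseteq> A" by blast
    moreover have "A \<subseteq> V" using separation_Un[OF AB(2)] by blast
    moreover note covers3_mono[OF separation_covers3[OF G separation_component[OF G _ comp]],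
        of "V - C" A A]
    ultimately have "covers3 V E (V - C) A A" by blast
    then show False using no_three_coverD[OF nc CP AB(1) AB(1)] by blast
  qed
  then show ?thesis using component_within_side[OF G AB(2) comp] by blast
qed

lemma principal_profile_if_principal_tangle:
  assumes G: "graph V E" and T: "principal_tangle V E k \<theta>"
  shows "principal_profile \<theta>"
  unfolding principal_profile_def
proof (intro allI impI)
  fix F assume F: "F \<subseteq> \<theta>" "F \<noteq> {}"
    and same_separator: "\<forall>s\<in>F. \<forall>t\<in>F. fst s \<inter> snd s = fst t \<inter> snd t"
  obtain A0 B0 where "(A0, B0) \<in> F" using F by fastforce
  define X where "X = A0 \<inter> B0"
  have sep0: "separation V E (A0, B0)" "sep_order (A0, B0) < enat k"
    using principal_tangleD(1,2)[OF T] F \<open>(A0, B0) \<in> F\<close> by auto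
  have "X \<subseteq> V" using separation_Un[OF sep0(1)] unfolding X_def by blast
  moreover have "finite X" "card X < k"
    using finite_separator_if_sep_order_less[OF sep0(2)] unfolding X_def by simp_all
  ultimately obtain C where comp: "component V E X C" and CT: "(V - C, C \<union> X) \<in> \<theta>"
    using principal_tangleD(3)[OF T] by blast
  have "C \<subseteq> snd s - fst s" if "s \<in> F" for s
  proof -
    obtain A B where s: "s = (A, B)" by fastforce
    have AB: "(A, B) \<in> \<theta>" using F that s by blast
    have X: "A \<inter> B = X"
      using same_separator[rule_format, OF that \<open>(A0, B0) \<in> F\<close>] s unfolding X_def by simp
    show ?thesis
      using component_within_big_side[OF G no_three_cover_if_principal_tangle[OF T] AB
          principal_tangleD(1)[OF T, rule_format, OF AB] comp[folded X] CT[folded X]] s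
      by simp
  qed
  then have "C \<subseteq> (\<Inter>s\<in>F. snd s - fst s)" by (rule INT_greatest)
  then show "(\<Inter>s\<in>F. snd s - fst s) \<noteq> {}" using component_nonempty[OF comp] by blast
qed

theorem proposition6p5:
  fixes V :: "'a set" and E :: "'a \<Rightarrow> 'a \<Rightarrow> bool" and k :: nat and \<theta> :: "'a sep set"
  assumes "graph V E"
    and "principal_tangle V E k \<theta>"
  shows "robust V E \<theta> \<and> principal_profile \<theta> \<and> k_profile V E k \<theta>"
proof -
  note tangle = principal_tangleD[OF assms(2)]
  have no_cover: "no_three_cover V E \<theta>"
    using no_three_cover_if_principal_tangle[OF assms(2)] .
  have "robust V E \<theta>"
    using robust_if_no_three_cover[OF assms(1) tangle(1) no_cover] .
  moreover have "principal_profile \<theta>"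
    using principal_profile_if_principal_tangle[OF assms] .
  moreover have "k_profile V E k \<theta>"
    unfolding k_profile_def
    using profile_if_no_three_cover[OF assms(1) tangle(1) no_cover] tangle(2,4) by blast
  ultimately show ?thesis by blast
qed

end
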